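(* The Fermat–Torricelli problem for four non-coplanar points forming a tetrahedron in $\mathbb{R}^3$ is not in general solvable by Euclidean (straightedge-and-compass) constructions: there exist tetrahedra $A_1A_2A_3A_4$ in $\mathbb{R}^3$ whose Fermat–Torricelli point $A_0$ (the minimizer of $\sum_{i=1}^4\|A_0-A_i\|$) cannot be constructed from the vertices by a Euclidean construction, i.e. (for vertices with rational coordinates) some coordinate of $A_0$ is not a constructible number over $\mathbb{Q}$.
   Context: A real number is constructible over $\mathbb{Q}$ if it lies in a field obtained from $\mathbb{Q}$ by a finite tower of quadratic extensions; a point is constructible by Euclidean constructions from given points with rational coordinates exactly when its coordinates are constructible numbers. The Fermat–Torricelli point of four points $A_1,\dots,A_4\in\mathbb{R}^3$ is the unique minimizer over $A_0\in\mathbb{R}^3$ of $\sum_{i=1}^4\|A_0-A_i\|$. *)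

theory Defs
  imports "HOL-Analysis.Analysis"
begin

definition real_subfield :: "real set \<Rightarrow> bool" where
  "real_subfield F \<longleftrightarrow> 0 \<in> F \<and> 1 \<in> F \<and>
     (\<forall>x\<in>F. \<forall>y\<in>F. x + y \<in> F \<and> x - y \<in> F \<and> x * y \<in> F) \<and>
     (\<forall>x\<in>F. inverse x \<in> F)"

definition quadratic_ext :: "real set \<Rightarrow> real set \<Rightarrow> bool" where
  "quadratic_ext F K \<longleftrightarrow>
     (\<exists>s. s\<^sup>2 \<in> F \<and> s \<notin> F \<and> K = {a + b * s | a b. a \<in> F \<and> b \<in> F})"

definition constructible :: "real \<Rightarrow> bool" where
  "constructible x \<longleftrightarrow>
     (\<exists>Fs :: real set list. Fs \<noteq> [] \<and> hd Fs = \<rat> \<and>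
        (\<forall>i. Suc i < length Fs \<longrightarrow> real_subfield (Fs ! i) \<and> quadratic_ext (Fs ! i) (Fs ! Suc i)) \<and>
        x \<in> last Fs)"

definition is_FT_point :: "real^3 \<Rightarrow> real^3 \<Rightarrow> real^3 \<Rightarrow> real^3 \<Rightarrow> real^3 \<Rightarrow> bool" where
  "is_FT_point A1 A2 A3 A4 A0 \<longleftrightarrow>
     (\<forall>X. norm (A0 - A1) + norm (A0 - A2) + norm (A0 - A3) + norm (A0 - A4)
          \<le> norm (X - A1) + norm (X - A2) + norm (X - A3) + norm (X - A4))"

end

theory Submission
  imports Defs
begin

text \<open>Take the vertices (\<plusminus>2, 0, 0), (0, 0, 2), (0, 1, 0). The sum of distances is convex and
  invariant under x \<mapsto> -x, so some Fermat-Torricelli point lies in the plane x = 0; it is not a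
  vertex, so both partial derivatives vanish there. Eliminating the unit vectors pointing to it from
  (0, 0, 2) and (0, 1, 0) shows that its z-coordinate is a root of z^3 - 6z^2 + 13z - 4, a cubic
  without rational roots. A root of a cubic over F lying in a quadratic extension F(s) forces a root
  in F, so descending the tower shows that this coordinate is not constructible.\<close>

lemma real_subfield_closed:
  assumes "real_subfield F"
  shows real_subfield_zero: "0 \<in> F" and real_subfield_one: "1 \<in> F"
    and real_subfield_add: "x \<in> F \<Longrightarrow> y \<in> F \<Longrightarrow> x + y \<in> F"
    and real_subfield_diff: "x \<in> F \<Longrightarrow> y \<in> F \<Longrightarrow> x - y \<in> F"
    and real_subfield_mult: "x \<in> F \<Longrightarrow> y \<in> F \<Longrightarrow> x * y \<in> F"
    and real_subfield_divide: "x \<in> F \<Longrightarrow> y \<in> F \<Longrightarrow> x / y \<in> F"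
  using assms unfolding real_subfield_def divide_inverse by auto

lemma real_subfield_power: "real_subfield F \<Longrightarrow> x \<in> F \<Longrightarrow> x ^ n \<in> F"
  by (induction n) (simp_all add: real_subfield_one real_subfield_mult)

lemma real_subfield_uminus: "real_subfield F \<Longrightarrow> x \<in> F \<Longrightarrow> - x \<in> F"
  using real_subfield_diff[of F 0 x] by (simp add: real_subfield_zero)

lemma real_subfield_numeral: "real_subfield F \<Longrightarrow> numeral n \<in> F"
  by (induction n) (simp_all only: numeral_One numeral_Bit0 numeral_Bit1
      real_subfield_one real_subfield_add)

lemma quadratic_ext_subset:
  assumes "real_subfield F" "quadratic_ext F K"
  shows "F \<subseteq> K"
  using assms unfolding quadratic_ext_def by (force intro: real_subfield_zero)

text \<open>If a + b s is a root with b \<noteq> 0, so is its conjugate a - b s, and the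
  third root is then -p - 2a, by Vieta.\<close>
lemma cubic_root_in_quadratic_ext:
  assumes F: "real_subfield F" and K: "quadratic_ext F K"
    and coeffs: "p \<in> F" "q \<in> F" "r \<in> F"
    and x: "x \<in> K" "x^3 + p * x^2 + q * x + r = 0"
  shows "\<exists>x'\<in>F. x'^3 + p * x'^2 + q * x' + r = 0"
proof -
  obtain s a b where sF: "s^2 \<in> F" "s \<notin> F" and ab: "a \<in> F" "b \<in> F" and xab: "x = a + b * s"
    using K x(1) unfolding quadratic_ext_def by blast
  define d where "d = s^2"
  define P where "P = a^3 + 3*a*b^2*d + p*(a^2 + b^2*d) + q*a + r"
  define Q where "Q = b * (3*a^2 + b^2*d + 2*p*a + q)"
  note closed = real_subfield_add[OF F] real_subfield_diff[OF F] real_subfield_mult[OF F]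
    real_subfield_power[OF F] real_subfield_numeral[OF F]
  have "d \<in> F" using sF d_def by simp
  then have "P \<in> F" "Q \<in> F"
    unfolding P_def Q_def by (intro closed ab coeffs; assumption)+
  have split: "P + Q * s = 0"
    using x(2) unfolding xab P_def Q_def d_def by algebra
  have "Q = 0"
  proof (rule ccontr)
    assume "Q \<noteq> 0"
    then have "s = - P / Q" using split by (simp add: field_simps)
    with \<open>P \<in> F\<close> \<open>Q \<in> F\<close> \<open>s \<notin> F\<close> show False
      by (metis F real_subfield_divide real_subfield_uminus)
  qed
  with split have "P = 0" by simp
  show ?thesis
  proof (cases "b = 0")
    case True
    then show ?thesis using x(2) ab xab by auto
  next
    case False
    with \<open>Q = 0\<close> have "3*a^2 + b^2*d + 2*p*a + q = 0" unfolding Q_def by simp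
    with \<open>P = 0\<close> have "(-p - 2*a)^3 + p * (-p - 2*a)^2 + q * (-p - 2*a) + r = 0"
      unfolding P_def by algebra
    moreover have "-p - 2*a \<in> F"
      by (intro closed real_subfield_uminus[OF F] ab coeffs)
    ultimately show ?thesis by blast
  qed
qed

lemma constructible_cubic_root_imp_rational_root:
  assumes "constructible x" and coeffs: "p \<in> \<rat>" "q \<in> \<rat>" "r \<in> \<rat>"
    and root: "x^3 + p * x^2 + q * x + r = 0"
  shows "\<exists>x'\<in>\<rat>. x'^3 + p * x'^2 + q * x' + r = 0"
proof -
  obtain Fs where "Fs \<noteq> []" and "hd Fs = \<rat>" and "x \<in> last Fs"
    and tower: "\<And>i. Suc i < length Fs \<Longrightarrow>
                  real_subfield (Fs ! i) \<and> quadratic_ext (Fs ! i) (Fs ! Suc i)"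
    using assms(1) unfolding constructible_def by blast
  then have Fs0: "Fs ! 0 = \<rat>" by (simp add: hd_conv_nth)
  have rats_subset: "\<rat> \<subseteq> Fs ! i" if "i < length Fs" for i
    using that
  proof (induction i)
    case (Suc i)
    then show ?case using tower[of i] quadratic_ext_subset by force
  qed (simp add: Fs0)
  have "\<exists>x'\<in>\<rat>. x'^3 + p * x'^2 + q * x' + r = 0"
    if "i < length Fs" "\<exists>x'\<in>Fs ! i. x'^3 + p * x'^2 + q * x' + r = 0" for i
    using that
  proof (induction i)
    case (Suc i)
    from Suc.prems(2) obtain y where "y \<in> Fs ! Suc i" "y^3 + p * y^2 + q * y + r = 0"
      by blast
    with tower[OF Suc.prems(1)] rats_subset[of i] Suc.prems(1) coeffs
    have "\<exists>x'\<in>Fs ! i. x'^3 + p * x'^2 + q * x' + r = 0"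
      by (intro cubic_root_in_quadratic_ext[of _ "Fs ! Suc i" _ _ _ y]) auto
    with Suc show ?case by simp
  qed (simp add: Fs0)
  from this[of "length Fs - 1"] \<open>Fs \<noteq> []\<close> \<open>x \<in> last Fs\<close> root show ?thesis
    by (auto simp: last_conv_nth)
qed

lemma rational_root_of_monic_int_cubic_is_int:
  fixes a b c :: int and x :: real
  assumes "x \<in> \<rat>" "x^3 + of_int a * x^2 + of_int b * x + of_int c = 0"
  shows "x \<in> \<int>"
proof -
  obtain m n :: int where "n > 0" "coprime m n" and x: "x = of_int m / of_int n"
    using Rats_cases'[OF assms(1)] by metis
  have "real_of_int (m^3 + a * m^2 * n + b * m * n^2 + c * n^3)
          = of_int n ^ 3 * (x^3 + of_int a * x^2 + of_int b * x + of_int c)"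
    unfolding x using \<open>n > 0\<close> by (simp add: field_simps power3_eq_cube power2_eq_square)
  with assms(2) have "m^3 = n * (- a * m^2 - b * m * n - c * n^2)"
    by (simp only: mult_zero_right of_int_eq_0_iff)
      (simp add: algebra_simps power2_eq_square power3_eq_cube)
  then have "n dvd m^3" by simp
  moreover have "coprime n (m^3)" using \<open>coprime m n\<close> by (simp add: coprime_commute)
  ultimately have "is_unit n" using coprime_absorb_left by blast
  with \<open>n > 0\<close> have "n = 1" by simp
  then show ?thesis by (simp add: x)
qed

text \<open>An integer root z satisfies z ((z - 3)^2 + 4) = 4, which forces z = 1; but 1 is no root.\<close>
lemma cubic_no_int_root: "(z::int)^3 - 6 * z^2 + 13 * z - 4 \<noteq> 0"
proof
  assume "z^3 - 6 * z^2 + 13 * z - 4 = 0"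
  then have eq: "z * ((z - 3)^2 + 4) = 4"
    by (simp add: algebra_simps power2_eq_square power3_eq_cube)
  have f: "(z - 3)^2 + 4 \<ge> 4" by simp
  have "z > 0"
  proof (rule ccontr)
    assume "\<not> z > 0"
    then have "z * ((z - 3)^2 + 4) \<le> 0" using f by (simp add: mult_nonpos_nonneg)
    with eq show False by simp
  qed
  moreover have "z \<le> 1"
  proof (rule ccontr)
    assume "\<not> z \<le> 1"
    then have "2 * 4 \<le> z * ((z - 3)^2 + 4)" using f by (intro mult_mono) auto
    with eq show False by simp
  qed
  ultimately have "z = 1" by simp
  with eq show False by simp
qed

lemma cubic_root_not_constructible:
  assumes "z^3 - 6 * z^2 + 13 * z - 4 = 0"
  shows "\<not> constructible z"
proof
  assume "constructible z"
  then obtain x :: real where "x \<in> \<rat>" and root: "x^3 + (-6) * x^2 + 13 * x + (-4) = 0"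
    using constructible_cubic_root_imp_rational_root[of z "-6" 13 "-4"] assms by auto
  then have "x \<in> \<int>" using rational_root_of_monic_int_cubic_is_int[of x "-6" 13 "-4"] by simp
  then obtain k where "x = of_int k" by (auto elim: Ints_cases)
  with root have "real_of_int (k^3 - 6 * k^2 + 13 * k - 4) = 0" by simp
  with cubic_no_int_root show False by (simp only: of_int_eq_0_iff)
qed

lemma coplanar_imp_in_hyperplane:
  fixes S :: "'a::euclidean_space set"
  assumes "coplanar S" and "DIM('a) \<ge> 3"
  obtains n c where "n \<noteq> 0" "\<And>x. x \<in> S \<Longrightarrow> n \<bullet> x = c"
proof -
  obtain u v w where S: "S \<subseteq> affine hull {u, v, w}"
    using assms(1) unfolding coplanar_def by blast
  have "dim {v - u, w - u} \<le> card {v - u, w - u}"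
    by (rule dim_le_card) (auto intro: span_base)
  also have "\<dots> < DIM('a)" using assms(2) by (simp add: card_insert_if)
  finally obtain n where "n \<noteq> 0" and n: "\<And>y. y \<in> span {v - u, w - u} \<Longrightarrow> orthogonal n y"
    using orthogonal_to_subspace_exists by blast
  have "n \<bullet> x = n \<bullet> u" if "x \<in> S" for x
  proof -
    obtain a b c where "a + b + c = 1" "x = a *\<^sub>R u + b *\<^sub>R v + c *\<^sub>R w"
      using S \<open>x \<in> S\<close> unfolding affine_hull_3 by blast
    then have "x - u = b *\<^sub>R (v - u) + c *\<^sub>R (w - u)"
      by (simp add: algebra_simps flip: scaleR_add_left)
    moreover have "b *\<^sub>R (v - u) + c *\<^sub>R (w - u) \<in> span {v - u, w - u}"
      by (intro span_add span_mul span_base) auto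
    ultimately have "orthogonal n (x - u)" using n by simp
    then show ?thesis by (simp add: orthogonal_def inner_diff_right)
  qed
  with \<open>n \<noteq> 0\<close> show thesis using that by blast
qed

lemma tetrahedron_not_coplanar:
  "\<not> coplanar {vector [2, 0, 0], vector [-2, 0, 0], vector [0, 0, 2], vector [0, 1, 0] :: real^3}"
proof
  assume "coplanar {vector [2, 0, 0], vector [-2, 0, 0], vector [0, 0, 2], vector [0, 1, 0] :: real^3}"
  from coplanar_imp_in_hyperplane[OF this] obtain n :: "real^3" and c where "n \<noteq> 0"
    and plane: "\<And>x. x \<in> {vector [2, 0, 0], vector [-2, 0, 0], vector [0, 0, 2], vector [0, 1, 0]}
                  \<Longrightarrow> n \<bullet> x = c"
    by auto
  have inner: "n \<bullet> vector [a, b, d] = n$1 * a + n$2 * b + n$3 * d" for a b d :: real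
    by (simp add: inner_vec_def sum_3)
  from plane[of "vector [2, 0, 0]"] plane[of "vector [-2, 0, 0]"] plane[of "vector [0, 0, 2]"]
    plane[of "vector [0, 1, 0]"]
  have "n$1 = 0" "n$2 = 0" "n$3 = 0" unfolding inner by simp_all
  with \<open>n \<noteq> 0\<close> show False by (simp add: vec_eq_iff forall_3)
qed

definition ft_sum :: "'a::real_normed_vector \<Rightarrow> 'a \<Rightarrow> 'a \<Rightarrow> 'a \<Rightarrow> 'a \<Rightarrow> real" where
  "ft_sum A1 A2 A3 A4 X = norm (X - A1) + norm (X - A2) + norm (X - A3) + norm (X - A4)"

lemma is_FT_point_iff_ft_sum_min:
  "is_FT_point A1 A2 A3 A4 A0 \<longleftrightarrow> (\<forall>X. ft_sum A1 A2 A3 A4 A0 \<le> ft_sum A1 A2 A3 A4 X)"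
  unfolding is_FT_point_def ft_sum_def ..

text \<open>Outside the ball around A1 of radius ft_sum at A1, the sum exceeds its value at A1.\<close>
lemma ft_sum_attains_min:
  fixes A1 A2 A3 A4 :: "'a::euclidean_space"
  obtains A0 where "\<And>X. ft_sum A1 A2 A3 A4 A0 \<le> ft_sum A1 A2 A3 A4 X"
proof -
  let ?f = "ft_sum A1 A2 A3 A4"
  have "continuous_on (cball A1 (?f A1)) ?f"
    unfolding ft_sum_def by (intro continuous_intros)
  moreover have "A1 \<in> cball A1 (?f A1)" by (simp add: ft_sum_def)
  ultimately obtain M where M: "\<And>X. X \<in> cball A1 (?f A1) \<Longrightarrow> ?f M \<le> ?f X"
    using continuous_attains_inf[OF compact_cball] by blast
  have "?f M \<le> ?f X" for X
  proof (cases "X \<in> cball A1 (?f A1)")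
    case False
    then have "?f A1 < norm (X - A1)" by (simp add: dist_norm norm_minus_commute)
    also have "\<dots> \<le> ?f X" by (simp add: ft_sum_def)
    finally have "?f A1 \<le> ?f X" by simp
    with M[of A1] show ?thesis by (simp add: ft_sum_def)
  qed (rule M)
  then show thesis by (rule that)
qed

lemma ft_sum_midpoint_le:
  "ft_sum A1 A2 A3 A4 (midpoint X Y) \<le> (ft_sum A1 A2 A3 A4 X + ft_sum A1 A2 A3 A4 Y) / 2"
proof -
  have mid: "norm (midpoint X Y - A) \<le> (norm (X - A) + norm (Y - A)) / 2" for A
  proof -
    have "midpoint X Y - A = (1/2) *\<^sub>R ((X - A) + (Y - A))"
      by (simp add: midpoint_def algebra_simps flip: scaleR_add_left)
    then show ?thesis using norm_triangle_ineq[of "X - A" "Y - A"] by simp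
  qed
  show ?thesis
    unfolding ft_sum_def using mid[of A1] mid[of A2] mid[of A3] mid[of A4] by argo
qed

text \<open>By convexity, the midpoint of a minimizer and its mirror image is again a minimizer.\<close>
lemma ft_sum_min_fixed_by_symmetry:
  fixes A1 A2 A3 A4 :: "'a::euclidean_space"
  assumes "linear R" and R_involution: "\<And>X. R (R X) = X"
    and R_invariant: "\<And>X. ft_sum A1 A2 A3 A4 (R X) = ft_sum A1 A2 A3 A4 X"
  obtains A0 where "\<And>X. ft_sum A1 A2 A3 A4 A0 \<le> ft_sum A1 A2 A3 A4 X" and "R A0 = A0"
proof -
  let ?f = "ft_sum A1 A2 A3 A4"
  obtain M where M: "\<And>X. ?f M \<le> ?f X" using ft_sum_attains_min by blast
  have "?f (midpoint M (R M)) \<le> ?f M"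
    using ft_sum_midpoint_le[of A1 A2 A3 A4 M "R M"] R_invariant[of M] by simp
  then have "?f (midpoint M (R M)) \<le> ?f X" for X using M[of X] by simp
  moreover have "R (midpoint M (R M)) = midpoint M (R M)"
    using \<open>linear R\<close> R_involution
    by (simp add: midpoint_def linear_add linear_scale add.commute)
  ultimately show thesis by (rule that)
qed

lemma norm_vec3: "norm (x :: real^3) = sqrt ((x$1)^2 + (x$2)^2 + (x$3)^2)"
  by (simp add: norm_eq_sqrt_inner inner_vec_def sum_3 power2_eq_square)

abbreviation ft_sum_tetra :: "real^3 \<Rightarrow> real" where
  "ft_sum_tetra \<equiv> ft_sum (vector [2, 0, 0]) (vector [-2, 0, 0]) (vector [0, 0, 2]) (vector [0, 1, 0])"

definition mirror_x :: "real^3 \<Rightarrow> real^3" where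
  "mirror_x X = vector [- (X$1), X$2, X$3]"

lemma linear_mirror_x: "linear mirror_x"
  by (rule linearI) (simp_all add: mirror_x_def vec_eq_iff forall_3)

lemma mirror_x_mirror_x: "mirror_x (mirror_x X) = X"
  by (simp add: mirror_x_def vec_eq_iff forall_3)

lemma ft_sum_tetra_mirror_x: "ft_sum_tetra (mirror_x X) = ft_sum_tetra X"
  unfolding ft_sum_def mirror_x_def norm_vec3 by (simp add: power2_eq_square algebra_simps)

definition ft_plane :: "real \<Rightarrow> real \<Rightarrow> real" where
  "ft_plane y z = 2 * sqrt (4 + y^2 + z^2) + sqrt (y^2 + (z - 2)^2) + sqrt ((y - 1)^2 + z^2)"

lemma ft_sum_tetra_plane: "ft_sum_tetra (vector [0, y, z]) = ft_plane y z"
  unfolding ft_sum_def ft_plane_def norm_vec3 by (simp add: power2_eq_square algebra_simps)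

lemma ft_sum_tetra_min_in_plane:
  obtains y z where "\<And>X. ft_sum_tetra (vector [0, y, z]) \<le> ft_sum_tetra X"
proof -
  obtain A0 where min: "\<And>X. ft_sum_tetra A0 \<le> ft_sum_tetra X" and "mirror_x A0 = A0"
    using ft_sum_min_fixed_by_symmetry[OF linear_mirror_x mirror_x_mirror_x ft_sum_tetra_mirror_x]
    by blast
  then have "A0 = vector [0, A0$2, A0$3]"
    unfolding mirror_x_def by (simp add: vec_eq_iff forall_3)
  with min show thesis by (intro that[of "A0$2" "A0$3"]) metis
qed

text \<open>Here p and q are the unit vectors from (0, 2) and (1, 0) towards P = (y, z), and
  P = -e (p + q) with 4 e^2 = 4 + |P|^2 is the stationarity condition of ft_plane at P.
  Computing e (p \<times> q) in two ways gives q2 = 2 p1.\<close>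
lemma balance_relations:
  fixes e y z p1 p2 q1 q2 :: real
  assumes p: "p1^2 + p2^2 = 1" and q: "q1^2 + q2^2 = 1"
    and y: "y = -e * (p1 + q1)" and z: "z = -e * (p2 + q2)"
    and p_dir: "y * p2 = (z - 2) * p1" and q_dir: "(y - 1) * q2 = z * q1"
    and e: "4 * e^2 = 4 + y^2 + z^2"
  shows "q2 = 2 * p1" and "p1 * q1 + p2 * q2 = 2 * p1^2 - 1" and "e^2 * (1 - p1^2) = 1"
proof -
  define cross where "cross = p1 * q2 - q1 * p2"
  define C where "C = p1 * q1 + p2 * q2"
  have cross_p: "e * cross = -2 * p1"
    using p_dir unfolding y z cross_def by algebra
  have cross_q: "e * cross = -q2"
    using q_dir unfolding y z cross_def by algebra
  then show q2: "q2 = 2 * p1" using cross_p by simp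
  have "y^2 + z^2 = e^2 * (2 + 2 * C)"
    using p q unfolding y z C_def by algebra
  with e have eC: "e^2 * (1 - C) = 2" by algebra
  have "cross^2 + C^2 = 1"
    using p q unfolding cross_def C_def by algebra
  with cross_p have "4 * p1^2 = e^2 * (1 - C) * (1 + C)" by algebra
  then have "4 * p1^2 = 2 * (1 + C)" by (simp only: eC)
  then have C: "C = 2 * p1^2 - 1" by simp
  then show "p1 * q1 + p2 * q2 = 2 * p1^2 - 1" unfolding C_def .
  from eC show "e^2 * (1 - p1^2) = 1" unfolding C by (simp add: algebra_simps)
qed

text \<open>With t = p1^2 and m = p1 p2, eliminating q1 gives 4t^2 - t + 1 = 4m(2t - 1); squaring and
  using m^2 = t(1 - t) yields (5t - 1)(16t^3 - 24t^2 + 13t - 1) = 0, and z = 4t.\<close>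
lemma balance_relations_imp_cubic:
  fixes e z p1 p2 q1 q2 :: real
  assumes p: "p1^2 + p2^2 = 1" and q: "q1^2 + q2^2 = 1"
    and q2: "q2 = 2 * p1" and C: "p1 * q1 + p2 * q2 = 2 * p1^2 - 1" and e: "e^2 * (1 - p1^2) = 1"
    and z: "z = -e * (p2 + q2)" and "z > 0"
  shows "z^3 - 6 * z^2 + 13 * z - 4 = 0"
proof -
  define t where "t = p1^2"
  define m where "m = p1 * p2"
  have "t \<ge> 0" unfolding t_def by simp
  have m_sq: "m^2 = t * (1 - t)" using p unfolding m_def t_def by algebra
  have pq: "p1 * q1 = 2 * t - 1 - 2 * m" using C q2 unfolding t_def m_def by algebra
  have "(p1 * q1)^2 = t * (1 - 4 * t)" using q q2 unfolding t_def by algebra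
  with pq m_sq have m: "4 * t^2 - t + 1 = 4 * m * (2 * t - 1)" by algebra
  with m_sq have t_roots: "(5 * t - 1) * (16 * t^3 - 24 * t^2 + 13 * t - 1) = 0" by algebra
  have z_sq: "z^2 * (1 - t) = 1 + 3 * t + 4 * m"
    using z q2 e p unfolding t_def m_def by algebra
  have "1 - t \<noteq> 0" using e unfolding t_def by auto
  have "2 * t - 1 \<noteq> 0"
  proof
    assume "2 * t - 1 = 0"
    then have "t = 1/2" by simp
    with m show False by (simp add: power2_eq_square)
  qed
  have "5 * t - 1 \<noteq> 0"
  proof
    assume "5 * t - 1 = 0"
    then have "t = 1/5" by simp
    with m have "m = -2/5" by (simp add: power2_eq_square)
    with z_sq \<open>t = 1/5\<close> have "z^2 = 0" by simp
    with \<open>z > 0\<close> show False by simp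
  qed
  with t_roots have cubic: "16 * t^3 - 24 * t^2 + 13 * t - 1 = 0" by simp
  have "(1 - t) * (2 * t - 1) * (z^2 - (4 * t)^2) = 0"
    using z_sq m cubic by algebra
  with \<open>1 - t \<noteq> 0\<close> \<open>2 * t - 1 \<noteq> 0\<close> have "z^2 = (4 * t)^2" by simp
  with \<open>z > 0\<close> \<open>t \<ge> 0\<close> have "z = 4 * t"
    using power2_eq_iff_nonneg[of z "4 * t"] by simp
  with cubic show ?thesis by algebra
qed

lemma ft_plane_not_min_at_vertices:
  "ft_plane (1/2) (1/2) < ft_plane 0 2" "ft_plane (1/2) (1/2) < ft_plane 1 0"
proof -
  have upper: "sqrt x \<le> c" if "0 \<le> c" "x \<le> c^2" for x c
    using that real_sqrt_le_mono[of x "c^2"] by simp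
  have lower: "c \<le> sqrt x" if "0 \<le> c" "c^2 \<le> x" for x c
    using that real_sqrt_le_mono[of "c^2" x] by simp
  have "ft_plane (1/2) (1/2) = 2 * sqrt (9/2) + sqrt (5/2) + sqrt (1/2)"
    unfolding ft_plane_def by (simp add: power2_eq_square)
  also have "\<dots> \<le> 2 * 2.1214 + 1.5812 + 0.7072"
    by (intro add_mono mult_left_mono upper) (simp_all add: power2_eq_square)
  finally have "ft_plane (1/2) (1/2) \<le> 6.5312" by simp
  moreover have "2 * 2.828 + 0 + 2.236 \<le> ft_plane 0 2"
    unfolding ft_plane_def by (intro add_mono mult_left_mono lower) (simp_all add: power2_eq_square)
  moreover have "2 * 2.236 + 2.236 + 0 \<le> ft_plane 1 0"
    unfolding ft_plane_def by (intro add_mono mult_left_mono lower) (simp_all add: power2_eq_square)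
  ultimately show "ft_plane (1/2) (1/2) < ft_plane 0 2" "ft_plane (1/2) (1/2) < ft_plane 1 0"
    by auto
qed

lemma ft_plane_stationary:
  assumes min: "\<And>y' z'. ft_plane y z \<le> ft_plane y' z'"
    and "(y, z) \<noteq> (0, 2)" and "(y, z) \<noteq> (1, 0)"
  shows "2 * y / sqrt (4 + y^2 + z^2) + y / sqrt (y^2 + (z - 2)^2)
           + (y - 1) / sqrt ((y - 1)^2 + z^2) = 0" (is ?dy)
    and "2 * z / sqrt (4 + y^2 + z^2) + (z - 2) / sqrt (y^2 + (z - 2)^2)
           + z / sqrt ((y - 1)^2 + z^2) = 0" (is ?dz)
proof -
  have pos: "4 + y^2 + z^2 > 0" "y^2 + (z - 2)^2 > 0" "(y - 1)^2 + z^2 > 0"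
    using assms(2,3) by (auto simp: add_pos_nonneg sum_power2_gt_zero_iff)
  have "((\<lambda>y. ft_plane y z) has_real_derivative
          2 * y / sqrt (4 + y^2 + z^2) + y / sqrt (y^2 + (z - 2)^2)
          + (y - 1) / sqrt ((y - 1)^2 + z^2)) (at y)"
    unfolding ft_plane_def using pos
    by (auto intro!: derivative_eq_intros simp: field_simps) (simp add: divide_simps)
  then show ?dy by (rule DERIV_local_min[of _ _ _ 1]) (use min in auto)
  have "((\<lambda>z. ft_plane y z) has_real_derivative
          2 * z / sqrt (4 + y^2 + z^2) + (z - 2) / sqrt (y^2 + (z - 2)^2)
          + z / sqrt ((y - 1)^2 + z^2)) (at z)"
    unfolding ft_plane_def using pos
    by (auto intro!: derivative_eq_intros simp: field_simps) (simp add: divide_simps)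
  then show ?dz by (rule DERIV_local_min[of _ _ _ 1]) (use min in auto)
qed

lemma ft_plane_stationary_imp_cubic:
  assumes "(y, z) \<noteq> (0, 2)" and "(y, z) \<noteq> (1, 0)"
    and dy: "2 * y / sqrt (4 + y^2 + z^2) + y / sqrt (y^2 + (z - 2)^2)
               + (y - 1) / sqrt ((y - 1)^2 + z^2) = 0"
    and dz: "2 * z / sqrt (4 + y^2 + z^2) + (z - 2) / sqrt (y^2 + (z - 2)^2)
               + z / sqrt ((y - 1)^2 + z^2) = 0"
  shows "z^3 - 6 * z^2 + 13 * z - 4 = 0"
proof -
  define d where "d = sqrt (4 + y^2 + z^2)"
  define D3 where "D3 = sqrt (y^2 + (z - 2)^2)"
  define D4 where "D4 = sqrt ((y - 1)^2 + z^2)"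
  have "d > 0" "D3 > 0" "D4 > 0"
    unfolding d_def D3_def D4_def using assms(1,2)
    by (auto simp: add_pos_nonneg sum_power2_gt_zero_iff)
  have d_sq: "d^2 = 4 + y^2 + z^2" unfolding d_def by simp
  have "D3^2 = y^2 + (z - 2)^2" "D4^2 = (y - 1)^2 + z^2" unfolding D3_def D4_def by simp_all
  define p1 p2 q1 q2 e where "p1 = y / D3" "p2 = (z - 2) / D3" "q1 = (y - 1) / D4" "q2 = z / D4"
    "e = d / 2"
  note defs = p1_p2_q1_q2_e_def
  have "z > 0"
  proof (rule ccontr)
    assume "\<not> z > 0"
    then have "2 * z / d \<le> 0" "(z - 2) / D3 < 0" "z / D4 \<le> 0"
      using \<open>d > 0\<close> \<open>D3 > 0\<close> \<open>D4 > 0\<close> by (auto simp: divide_nonpos_pos divide_neg_pos)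
    with dz show False unfolding d_def D3_def D4_def by linarith
  qed
  have unit: "(a / D)^2 + (b / D)^2 = 1" if "D > 0" "D^2 = a^2 + b^2" for a b D :: real
  proof -
    have "(a / D)^2 + (b / D)^2 = (a^2 + b^2) / D^2" by (simp add: power_divide add_divide_distrib)
    with that(1) show ?thesis by (simp flip: that(2))
  qed
  have "p1^2 + p2^2 = 1" "q1^2 + q2^2 = 1"
    unfolding defs using \<open>D3 > 0\<close> \<open>D4 > 0\<close> \<open>D3^2 = _\<close> \<open>D4^2 = _\<close> by (simp_all add: unit)
  moreover have "y = -e * (p1 + q1)" "z = -e * (p2 + q2)"
    using dy dz \<open>d > 0\<close> unfolding defs d_def D3_def D4_def by (simp_all add: field_simps)
  moreover have "y * p2 = (z - 2) * p1" "(y - 1) * q2 = z * q1"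
    unfolding defs by (simp_all add: field_simps)
  moreover have "4 * e^2 = 4 + y^2 + z^2"
    using d_sq unfolding defs by (simp add: power_divide)
  ultimately show ?thesis
    using balance_relations balance_relations_imp_cubic \<open>z > 0\<close> by metis
qed

lemma ft_plane_min_cubic:
  assumes min: "\<And>y' z'. ft_plane y z \<le> ft_plane y' z'"
  shows "z^3 - 6 * z^2 + 13 * z - 4 = 0"
proof -
  have not_A3: "(y, z) \<noteq> (0, 2)"
    using min[of "1/2" "1/2"] ft_plane_not_min_at_vertices(1) by auto
  have not_A4: "(y, z) \<noteq> (1, 0)"
    using min[of "1/2" "1/2"] ft_plane_not_min_at_vertices(2) by auto
  show ?thesis
    using not_A3 not_A4 ft_plane_stationary[OF min not_A3 not_A4]
    by (rule ft_plane_stationary_imp_cubic)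
qed

theorem mainTheorem3:
  shows "\<exists>A1 A2 A3 A4 :: real^3.
           \<not> coplanar {A1, A2, A3, A4} \<and>
           (\<forall>j. A1 $ j \<in> \<rat> \<and> A2 $ j \<in> \<rat> \<and> A3 $ j \<in> \<rat> \<and> A4 $ j \<in> \<rat>) \<and>
           (\<exists>A0. is_FT_point A1 A2 A3 A4 A0 \<and> (\<exists>j. \<not> constructible (A0 $ j)))"
proof -
  obtain y z where min: "\<And>X. ft_sum_tetra (vector [0, y, z]) \<le> ft_sum_tetra X"
    using ft_sum_tetra_min_in_plane by blast
  then have "ft_plane y z \<le> ft_plane y' z'" for y' z'
    using min[of "vector [0, y', z']"] by (simp add: ft_sum_tetra_plane)
  then have "z^3 - 6 * z^2 + 13 * z - 4 = 0" by (rule ft_plane_min_cubic)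
  then have "\<not> constructible ((vector [0, y, z] :: real^3) $ 3)"
    by (simp add: cubic_root_not_constructible)
  moreover have "is_FT_point (vector [2, 0, 0]) (vector [-2, 0, 0]) (vector [0, 0, 2])
      (vector [0, 1, 0]) (vector [0, y, z])"
    using min by (simp add: is_FT_point_iff_ft_sum_min)
  moreover have "\<forall>j. (vector [2, 0, 0] :: real^3) $ j \<in> \<rat> \<and>
      (vector [-2, 0, 0] :: real^3) $ j \<in> \<rat> \<and> (vector [0, 0, 2] :: real^3) $ j \<in> \<rat> \<and>
      (vector [0, 1, 0] :: real^3) $ j \<in> \<rat>"
    by (simp add: forall_3)
  ultimately show ?thesis using tetrahedron_not_coplanar by metis
qed

end
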